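(* Fix $\lambda,\sigma>0$, let $\{\psi_p\}_{p\in\mathbb{R}^2\times S^1}$ be the Gabor family and $d(p,q)=\|\psi_p-\psi_q\|_{L^2}$. For $p_0=(x_0,y_0,\theta_0)$ let $$g(p_0)=2\sigma^2\pi\begin{pmatrix}\big(\frac{1}{4\sigma^2}+\frac{2\pi^2}{\lambda^2}\big)\cos^2\theta_0+\frac{1}{4\sigma^2}\sin^2\theta_0 & \frac{2\pi^2}{\lambda^2}\cos\theta_0\sin\theta_0 & 0\\ \frac{2\pi^2}{\lambda^2}\cos\theta_0\sin\theta_0 & \big(\frac{1}{4\sigma^2}+\frac{2\pi^2}{\lambda^2}\big)\sin^2\theta_0+\frac{1}{4\sigma^2}\cos^2\theta_0 & 0\\ 0&0&\frac{\sigma^2\pi^2}{\lambda^2}\end{pmatrix}.$$ Then, as $p=(x,y,\theta)\to p_0$ (with $\theta-\theta_0$ represented in $(-\pi,\pi]$), writing $\Delta=(x-x_0,y-y_0,\theta-\theta_0)$, $$d^2(p,p_0)=\Delta^{T}g(p_0)\Delta+o(|\Delta|^2).$$ Moreover $\det g(p_0)=8\sigma^6\pi^3\big(\frac{1}{4\sigma^2}+\frac{2\pi^2}{\lambda^2}\big)\frac{1}{4\sigma^2}\frac{\sigma^2\pi^2}{\lambda^2}$ is independent of $p_0$, so the Riemannian measure of $g$ is a constant multiple of Lebesgue measure on $\mathbb{R}^2\times S^1$.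
   Context: Gabor family: for $p=(x,y,\theta)\in\mathbb{R}^2\times S^1$, $\psi_p(u,v)=\psi_0(R_{-\theta}(u-x,v-y))$ with $\psi_0(u,v)=\exp(2\pi iu/\lambda)\exp(-\frac{u^2+v^2}{2\sigma^2})$, where $R_\alpha$ is the rotation of $\mathbb{R}^2$ by angle $\alpha$. *)

theory Defs
  imports "HOL-Analysis.Analysis"
begin

definition gabor0 :: "real \<Rightarrow> real \<Rightarrow> real \<times> real \<Rightarrow> complex" where
  "gabor0 lam sig uv = (case uv of (u, v) \<Rightarrow>
     cis (2 * pi * u / lam) * complex_of_real (exp (- (u\<^sup>2 + v\<^sup>2) / (2 * sig\<^sup>2))))"

definition rot :: "real \<Rightarrow> real \<times> real \<Rightarrow> real \<times> real" where
  "rot \<alpha> ab = (case ab of (a, b) \<Rightarrow> (cos \<alpha> * a - sin \<alpha> * b, sin \<alpha> * a + cos \<alpha> * b))"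

text \<open>Gabor family, indexed by p = (x, y, theta) written as a vector with
  p$1 = x, p$2 = y, p$3 = theta (theta a real representative of the angle in S^1):
  psi_p(u,v) = psi_0(R_{-theta}(u - x, v - y)).\<close>
definition gabor :: "real \<Rightarrow> real \<Rightarrow> real^3 \<Rightarrow> real \<times> real \<Rightarrow> complex" where
  "gabor lam sig p uv = (case uv of (u, v) \<Rightarrow>
     gabor0 lam sig (rot (- (p$3)) (u - p$1, v - p$2)))"

definition gabor_dist :: "real \<Rightarrow> real \<Rightarrow> real^3 \<Rightarrow> real^3 \<Rightarrow> real" where
  "gabor_dist lam sig p q =
     sqrt (integral\<^sup>L lborel (\<lambda>z::real \<times> real. (cmod (gabor lam sig p z - gabor lam sig q z))\<^sup>2))"

definition gabor_metric :: "real \<Rightarrow> real \<Rightarrow> real^3 \<Rightarrow> real^3^3" where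
  "gabor_metric lam sig p0 =
    (let t = p0$3; A = 1 / (4 * sig\<^sup>2); B = 2 * pi\<^sup>2 / lam\<^sup>2 in
     (2 * sig\<^sup>2 * pi) *\<^sub>R
       vector [vector [(A + B) * (cos t)\<^sup>2 + A * (sin t)\<^sup>2, B * cos t * sin t, 0],
               vector [B * cos t * sin t, (A + B) * (sin t)\<^sup>2 + A * (cos t)\<^sup>2, 0],
               vector [0, 0, sig\<^sup>2 * pi\<^sup>2 / lam\<^sup>2]])"

end

theory Submission
  imports Defs "HOL-Probability.Characteristic_Functions"
begin

text \<open>The inner product of two Gabor functions is a Gaussian integral that factorises over the two
  coordinates and can be computed in closed form:
  \<open>\<langle>\<psi>\<^sub>p, \<psi>\<^sub>q\<rangle> = \<pi>\<sigma>\<^sup>2 exp (-E(p,q)) exp (-i \<Phi>(p,q))\<close>, where \<open>E\<close> collects the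
  Gaussian decay in the distance of the centres and in the angle, and \<open>\<Phi>\<close> is a phase. Hence
  \<open>d\<^sup>2(p,q) = 2\<pi>\<sigma>\<^sup>2 (1 - exp (-E) cos \<Phi>)\<close> exactly. With \<open>q = p\<^sub>0\<close>, \<open>p = p\<^sub>0 + \<Delta>\<close>, \<open>E\<close> and
  \<open>\<Phi>\<^sup>2/2\<close> agree with the quadratic form of \<open>g(p\<^sub>0)\<close> up to \<open>O(|\<Delta>|\<^sup>3)\<close>, and so does
  \<open>1 - exp (-E) cos \<Phi>\<close> with \<open>E + \<Phi>\<^sup>2/2\<close>; this cubic bound gives the \<open>o(|\<Delta>|\<^sup>2)\<close> expansion.\<close>

lemma abs_mult_le_mult: "\<bar>a\<bar> \<le> A \<Longrightarrow> \<bar>b\<bar> \<le> B \<Longrightarrow> \<bar>a * b\<bar> \<le> A * B" for a b A B :: real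
  unfolding abs_mult by (rule mult_mono') auto

lemma one_minus_cos_le_quadratic: "1 - cos x \<le> x\<^sup>2 / 2" for x :: real
proof -
  have "(sin (x / 2))\<^sup>2 \<le> (x / 2)\<^sup>2"
    using abs_sin_x_le_abs_x[of "x / 2"] by (metis power2_abs power_mono abs_ge_zero)
  then show ?thesis
    using cos_double_sin[of "x / 2"] by (simp add: power_divide)
qed

lemma abs_one_minus_cos_minus_quadratic_le: "\<bar>1 - cos x - x\<^sup>2 / 2\<bar> \<le> \<bar>x\<bar> ^ 3 / 6" for x :: real
proof -
  have "Re (iexp x - (\<Sum>k \<le> 2. (\<i> * x) ^ k / fact k)) = cos x - 1 + x\<^sup>2 / 2"
    by (simp add: numeral_2_eq_2 cis_conv_exp[symmetric] power2_eq_square)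
  moreover have "\<bar>Re (iexp x - (\<Sum>k \<le> 2. (\<i> * x) ^ k / fact k))\<bar> \<le> \<bar>x\<bar> ^ 3 / 6"
    using abs_Re_le_cmod[of "iexp x - (\<Sum>k \<le> 2. (\<i> * x) ^ k / fact k)"] iexp_approx1[of x 2]
    by (simp add: numeral_3_eq_3)
  ultimately have "\<bar>cos x - 1 + x\<^sup>2 / 2\<bar> \<le> \<bar>x\<bar> ^ 3 / 6"
    by simp
  moreover have "\<bar>1 - cos x - x\<^sup>2 / 2\<bar> = \<bar>cos x - 1 + x\<^sup>2 / 2\<bar>"
    by linarith
  ultimately show ?thesis
    by simp
qed

lemma abs_cos_diff_le: "\<bar>cos a - cos b\<bar> \<le> \<bar>a - b\<bar>" for a b :: real
proof -
  have "\<bar>cos a - cos b\<bar> = 2 * \<bar>sin ((a + b) / 2)\<bar> * \<bar>sin ((b - a) / 2)\<bar>"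
    by (simp add: cos_diff_cos abs_mult)
  also have "\<dots> \<le> 2 * 1 * \<bar>(b - a) / 2\<bar>"
    by (intro mult_mono abs_sin_x_le_abs_x) auto
  finally show ?thesis
    by simp
qed

lemma abs_sin_diff_le: "\<bar>sin a - sin b\<bar> \<le> \<bar>a - b\<bar>" for a b :: real
proof -
  have "\<bar>sin a - sin b\<bar> = 2 * \<bar>sin ((a - b) / 2)\<bar> * \<bar>cos ((a + b) / 2)\<bar>"
    by (simp add: sin_diff_sin abs_mult)
  also have "\<dots> \<le> 2 * \<bar>(a - b) / 2\<bar> * 1"
    by (intro mult_mono abs_sin_x_le_abs_x) auto
  finally show ?thesis
    by simp
qed

lemma abs_one_minus_exp_minus_le: "\<bar>1 - exp (- q) - q\<bar> \<le> q\<^sup>2 / 2" if "0 \<le> q" for q :: real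
proof -
  have "exp (- q) * (1 + q + q\<^sup>2 / 2) \<le> exp (- q) * exp q"
    using exp_lower_Taylor_quadratic[OF that] by (intro mult_left_mono) auto
  also have "\<dots> \<le> (1 - q + q\<^sup>2 / 2) * (1 + q + q\<^sup>2 / 2)"
    using that by (simp add: exp_minus power2_eq_square algebra_simps)
  finally have "exp (- q) \<le> 1 - q + q\<^sup>2 / 2"
    using that by (simp add: add_pos_nonneg)
  moreover have "1 - q \<le> exp (- q)"
    using exp_ge_add_one_self[of "- q"] by simp
  ultimately show ?thesis
    by (simp add: abs_le_iff)
qed

lemma abs_one_minus_exp_cos_remainder_le:
  fixes Q Q' L L' r M a b c :: real
  assumes r: "0 \<le> r" "r \<le> 1" and "0 \<le> M"
    and Q: "0 \<le> Q" "Q \<le> M * r\<^sup>2" "\<bar>Q - Q'\<bar> \<le> a * r ^ 3"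
    and L: "\<bar>L\<bar> \<le> b * r" "\<bar>L'\<bar> \<le> b * r" "\<bar>L - L'\<bar> \<le> c * r\<^sup>2"
  shows "\<bar>(1 - exp (- Q) * cos L) - (Q' + L'\<^sup>2 / 2)\<bar> \<le> (M\<^sup>2 / 2 + M * b\<^sup>2 / 2 + b ^ 3 / 6 + a + b * c) * r ^ 3"
proof -
  have r_pow: "r ^ 4 \<le> r ^ 3"
    using r by (simp add: power_decreasing)
  have br: "0 \<le> b * r"
    using L(1) by linarith
  have "\<bar>1 - exp (- Q) - Q\<bar> \<le> (M * r\<^sup>2)\<^sup>2 / 2"
    using abs_one_minus_exp_minus_le[OF Q(1)] power_mono[OF Q(2) Q(1), of 2] by linarith
  also have "\<dots> = M\<^sup>2 / 2 * r ^ 4"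
    by (simp add: power_mult_distrib flip: power_mult)
  also have "\<dots> \<le> M\<^sup>2 / 2 * r ^ 3"
    using r_pow by (intro mult_left_mono) auto
  finally have exp_part: "\<bar>1 - exp (- Q) - Q\<bar> \<le> M\<^sup>2 / 2 * r ^ 3" .
  have "\<bar>(exp (- Q) - 1) * (1 - cos L)\<bar> \<le> (M * r\<^sup>2) * ((b * r)\<^sup>2 / 2)"
  proof (rule abs_mult_le_mult)
    show "\<bar>exp (- Q) - 1\<bar> \<le> M * r\<^sup>2"
      using exp_ge_add_one_self[of "- Q"] Q(1,2) by (simp add: abs_le_iff)
    have "L\<^sup>2 \<le> (b * r)\<^sup>2"
      using L(1) br by (metis abs_ge_zero power2_abs power_mono)
    then show "\<bar>1 - cos L\<bar> \<le> (b * r)\<^sup>2 / 2"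
      using one_minus_cos_le_quadratic[of L] by simp
  qed
  also have "\<dots> = M * b\<^sup>2 / 2 * r ^ 4"
    by (simp add: power_mult_distrib power2_eq_square power4_eq_xxxx)
  also have "\<dots> \<le> M * b\<^sup>2 / 2 * r ^ 3"
    using r_pow \<open>0 \<le> M\<close> by (intro mult_left_mono) auto
  finally have mixed_part: "\<bar>(exp (- Q) - 1) * (1 - cos L)\<bar> \<le> M * b\<^sup>2 / 2 * r ^ 3" .
  have "\<bar>1 - cos L - L\<^sup>2 / 2\<bar> \<le> (b * r) ^ 3 / 6"
    using abs_one_minus_cos_minus_quadratic_le[of L] power_mono[OF L(1), of 3] by simp
  then have cos_part: "\<bar>1 - cos L - L\<^sup>2 / 2\<bar> \<le> b ^ 3 / 6 * r ^ 3"
    by (simp add: power_mult_distrib)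
  have "\<bar>(L - L') * (L + L')\<bar> \<le> (c * r\<^sup>2) * (2 * (b * r))"
    using L by (intro abs_mult_le_mult) auto
  then have phase_part: "\<bar>(L\<^sup>2 - L'\<^sup>2) / 2\<bar> \<le> b * c * r ^ 3"
    by (simp add: power2_eq_square power3_eq_cube algebra_simps)
  have split: "(1 - exp (- Q) * cos L) - (Q' + L'\<^sup>2 / 2)
      = (1 - exp (- Q) - Q) + (exp (- Q) - 1) * (1 - cos L) + (1 - cos L - L\<^sup>2 / 2) + (Q - Q') + (L\<^sup>2 - L'\<^sup>2) / 2"
    by (simp add: field_simps)
  have "\<bar>(1 - exp (- Q) * cos L) - (Q' + L'\<^sup>2 / 2)\<bar>
      \<le> M\<^sup>2 / 2 * r ^ 3 + M * b\<^sup>2 / 2 * r ^ 3 + b ^ 3 / 6 * r ^ 3 + a * r ^ 3 + b * c * r ^ 3"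
    unfolding split using exp_part mixed_part cos_part Q(3) phase_part by linarith
  then show ?thesis
    by (simp add: algebra_simps)
qed

lemma tendsto_div_norm_sq_zero_if_cubic_bound:
  fixes F :: "'a::real_normed_vector \<Rightarrow> real"
  assumes "eventually (\<lambda>x. \<bar>F x\<bar> \<le> K * norm x ^ 3) (at 0)"
  shows "((\<lambda>x. F x / (norm x)\<^sup>2) \<longlongrightarrow> 0) (at 0)"
proof (rule Lim_null_comparison)
  show "eventually (\<lambda>x. norm (F x / (norm x)\<^sup>2) \<le> K * norm x) (at 0)"
    using assms eventually_neq_at_within[of 0 0 UNIV]
  proof eventually_elim
    case (elim x)
    then have "\<bar>F x\<bar> / (norm x)\<^sup>2 \<le> K * norm x ^ 3 / (norm x)\<^sup>2"
      by (intro divide_right_mono) auto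
    with elim show ?case
      by (simp add: power2_eq_square power3_eq_cube)
  qed
  show "((\<lambda>x. K * norm x) \<longlongrightarrow> 0) (at 0)"
    by (auto intro!: tendsto_eq_intros)
qed

lemma norm_vec3_sq: "(norm d)\<^sup>2 = (d$1)\<^sup>2 + (d$2)\<^sup>2 + (d$3)\<^sup>2" for d :: "real^3"
proof -
  have "(norm d)\<^sup>2 = d \<bullet> d"
    by (rule power2_norm_eq_inner)
  then show ?thesis
    by (simp add: inner_vec_def sum_3 power2_eq_square)
qed

lemma has_bochner_integral_std_normal_iexp:
  "has_bochner_integral lborel (\<lambda>x. std_normal_density x *\<^sub>R iexp (u * x))
     (complex_of_real (exp (- (u\<^sup>2) / 2)))"
proof -
  interpret P: prob_space std_normal_distribution
    by (rule prob_space_normal_density) simp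
  have "integrable std_normal_distribution (\<lambda>x. iexp (u * x))"
    by (rule P.integrable_iexp) auto
  then have "integrable lborel (\<lambda>x. std_normal_density x *\<^sub>R iexp (u * x))"
    by (subst (asm) integrable_density) auto
  moreover have "integral\<^sup>L lborel (\<lambda>x. std_normal_density x *\<^sub>R iexp (u * x)) = char std_normal_distribution u"
    unfolding char_def by (subst integral_density) auto
  ultimately show ?thesis
    using char_std_normal_distribution by (simp add: has_bochner_integral_iff)
qed

lemma has_bochner_integral_gaussian_cis:
  fixes s c m :: real
  assumes "s > 0"
  shows "has_bochner_integral lborel (\<lambda>t. cis (c * (t - m)) * complex_of_real (exp (- ((t - m)\<^sup>2) / s\<^sup>2)))
           (complex_of_real (sqrt pi * s * exp (- (c\<^sup>2 * s\<^sup>2) / 4)))"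
proof -
  define f where "f t = cis (c * (t - m)) * complex_of_real (exp (- ((t - m)\<^sup>2) / s\<^sup>2))" for t
  define a where "a = s / sqrt 2"
  have "a > 0" using assms by (simp add: a_def)
  have f_affine: "f (m + a * x) = complex_of_real (sqrt (2 * pi)) * (std_normal_density x *\<^sub>R iexp ((c * a) * x))" for x
  proof -
    have "(a * x)\<^sup>2 / s\<^sup>2 = x\<^sup>2 / 2"
      using assms by (simp add: a_def power_mult_distrib power_divide)
    then show ?thesis
      by (simp add: f_def std_normal_density_def scaleR_conv_of_real real_sqrt_mult cis_conv_exp mult_ac)
  qed
  define I where "I = complex_of_real (sqrt pi * s * exp (- (c\<^sup>2 * s\<^sup>2) / 4))"
  have I_scaled: "I /\<^sub>R \<bar>a\<bar> = complex_of_real (sqrt (2 * pi)) * complex_of_real (exp (- ((c * a)\<^sup>2) / 2))"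
    using assms \<open>a > 0\<close>
    by (simp add: I_def a_def real_sqrt_mult power_mult_distrib power_divide scaleR_conv_of_real field_simps
             flip: of_real_mult)
  have "has_bochner_integral lborel (\<lambda>x. f (m + a * x)) (I /\<^sub>R \<bar>a\<bar>)"
    unfolding f_affine I_scaled
    by (intro has_bochner_integral_mult_right has_bochner_integral_std_normal_iexp)
  then show ?thesis
    using lborel_has_bochner_integral_real_affine_iff[of a f I m] \<open>a > 0\<close> unfolding f_def I_def by simp
qed

lemma has_bochner_integral_lborel_pair_mult:
  fixes f g :: "real \<Rightarrow> complex"
  assumes f: "has_bochner_integral lborel f I" and g: "has_bochner_integral lborel g J"
  shows "has_bochner_integral lborel (\<lambda>z. f (fst z) * g (snd z)) (I * J)"
proof -
  have int_f: "integrable lborel f" and int_g: "integrable lborel g"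
    using f g by (auto simp: has_bochner_integral_iff)
  then have [measurable]: "f \<in> borel_measurable lborel" "g \<in> borel_measurable lborel"
    by auto
  have int: "integrable (lborel \<Otimes>\<^sub>M lborel) (\<lambda>z. f (fst z) * g (snd z))"
  proof (rule lborel_pair.Fubini_integrable)
    show "integrable lborel (\<lambda>x. \<integral>y. norm (f (fst (x, y)) * g (snd (x, y))) \<partial>lborel)"
      using int_f by (simp add: norm_mult integrable_mult_left)
  qed (use int_g in simp_all)
  have "(\<integral>z. f (fst z) * g (snd z) \<partial>(lborel \<Otimes>\<^sub>M lborel)) = (\<integral>x. (\<integral>y. f x * g y \<partial>lborel) \<partial>lborel)"
    using lborel_pair.integral_fst'[OF int] by simp
  also have "\<dots> = I * J"
    using f g by (simp add: has_bochner_integral_iff)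
  finally show ?thesis
    using int by (simp add: has_bochner_integral_iff lborel_prod)
qed

text \<open>Completing the square: the product of two Gaussians is a Gaussian centred at the midpoint of
  their centres, which makes the inner product of two Gabor functions factorise over \<open>u\<close> and \<open>v\<close>.\<close>

lemma gaussian_wave_mult_cnj:
  fixes k sig c1 s1 x1 y1 c2 s2 x2 y2 u v :: real
  assumes "sig \<noteq> 0"
  shows "cis (k * (c1 * (u - x1) + s1 * (v - y1))) * complex_of_real (exp (- ((u - x1)\<^sup>2 + (v - y1)\<^sup>2) / (2 * sig\<^sup>2))) *
         cnj (cis (k * (c2 * (u - x2) + s2 * (v - y2))) * complex_of_real (exp (- ((u - x2)\<^sup>2 + (v - y2)\<^sup>2) / (2 * sig\<^sup>2))))
       = (cis (- (k / 2 * ((c1 + c2) * (x1 - x2) + (s1 + s2) * (y1 - y2)))) *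
            complex_of_real (exp (- ((x1 - x2)\<^sup>2 + (y1 - y2)\<^sup>2) / (4 * sig\<^sup>2)))) *
         ((cis (k * (c1 - c2) * (u - (x1 + x2) / 2)) * complex_of_real (exp (- ((u - (x1 + x2) / 2)\<^sup>2) / sig\<^sup>2))) *
          (cis (k * (s1 - s2) * (v - (y1 + y2) / 2)) * complex_of_real (exp (- ((v - (y1 + y2) / 2)\<^sup>2) / sig\<^sup>2))))"
proof -
  have exponent: "- ((u - x1)\<^sup>2 + (v - y1)\<^sup>2) / (2 * sig\<^sup>2) + - ((u - x2)\<^sup>2 + (v - y2)\<^sup>2) / (2 * sig\<^sup>2)
      = - ((x1 - x2)\<^sup>2 + (y1 - y2)\<^sup>2) / (4 * sig\<^sup>2) + (- ((u - (x1 + x2) / 2)\<^sup>2) / sig\<^sup>2 + - ((v - (y1 + y2) / 2)\<^sup>2) / sig\<^sup>2)"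
    using assms by (simp add: field_simps power2_eq_square)
  have phase: "k * (c1 * (u - x1) + s1 * (v - y1)) - k * (c2 * (u - x2) + s2 * (v - y2))
      = - (k / 2 * ((c1 + c2) * (x1 - x2) + (s1 + s2) * (y1 - y2))) + (k * (c1 - c2) * (u - (x1 + x2) / 2) + k * (s1 - s2) * (v - (y1 + y2) / 2))"
    by (simp add: field_simps)
  have "exp (- ((u - x1)\<^sup>2 + (v - y1)\<^sup>2) / (2 * sig\<^sup>2)) * exp (- ((u - x2)\<^sup>2 + (v - y2)\<^sup>2) / (2 * sig\<^sup>2))
      = exp (- ((x1 - x2)\<^sup>2 + (y1 - y2)\<^sup>2) / (4 * sig\<^sup>2)) *
        (exp (- ((u - (x1 + x2) / 2)\<^sup>2) / sig\<^sup>2) * exp (- ((v - (y1 + y2) / 2)\<^sup>2) / sig\<^sup>2))"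
    by (simp only: exp_add[symmetric] exponent)
  moreover have "cis (k * (c1 * (u - x1) + s1 * (v - y1))) * cnj (cis (k * (c2 * (u - x2) + s2 * (v - y2))))
      = cis (- (k / 2 * ((c1 + c2) * (x1 - x2) + (s1 + s2) * (y1 - y2)))) *
        (cis (k * (c1 - c2) * (u - (x1 + x2) / 2)) * cis (k * (s1 - s2) * (v - (y1 + y2) / 2)))"
    unfolding cis_cnj cis_mult phase[symmetric] by simp
  ultimately show ?thesis
    by (simp add: mult_ac flip: of_real_mult)
qed

lemma gabor_eq:
  "gabor lam sig p (u, v) =
     cis (2 * pi / lam * (cos (p$3) * (u - p$1) + sin (p$3) * (v - p$2))) *
     complex_of_real (exp (- ((u - p$1)\<^sup>2 + (v - p$2)\<^sup>2) / (2 * sig\<^sup>2)))"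
proof -
  let ?a = "cos (p$3) * (u - p$1) + sin (p$3) * (v - p$2)"
  let ?b = "cos (p$3) * (v - p$2) - sin (p$3) * (u - p$1)"
  have rot: "rot (- p$3) (u - p$1, v - p$2) = (?a, ?b)"
    by (simp add: rot_def algebra_simps)
  have "?a\<^sup>2 + ?b\<^sup>2 = ((cos (p$3))\<^sup>2 + (sin (p$3))\<^sup>2) * ((u - p$1)\<^sup>2 + (v - p$2)\<^sup>2)"
    by algebra
  then have "?a\<^sup>2 + ?b\<^sup>2 = (u - p$1)\<^sup>2 + (v - p$2)\<^sup>2"
    by simp
  then show ?thesis
    unfolding gabor_def gabor0_def rot prod.case by (simp add: mult.assoc)
qed

definition gabor_decay :: "real \<Rightarrow> real \<Rightarrow> real^3 \<Rightarrow> real^3 \<Rightarrow> real" where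
  "gabor_decay lam sig p q =
     ((p$1 - q$1)\<^sup>2 + (p$2 - q$2)\<^sup>2) / (4 * sig\<^sup>2) + sig\<^sup>2 * (2 * pi / lam)\<^sup>2 * (1 - cos (p$3 - q$3)) / 2"

definition gabor_phase :: "real \<Rightarrow> real^3 \<Rightarrow> real^3 \<Rightarrow> real" where
  "gabor_phase lam p q =
     pi / lam * ((cos (p$3) + cos (q$3)) * (p$1 - q$1) + (sin (p$3) + sin (q$3)) * (p$2 - q$2))"

lemma has_bochner_integral_gabor_inner:
  assumes "sig > 0"
  shows "has_bochner_integral lborel (\<lambda>z. gabor lam sig p z * cnj (gabor lam sig q z))
           (complex_of_real (pi * sig\<^sup>2 * exp (- gabor_decay lam sig p q)) * cis (- gabor_phase lam p q))"
proof -
  define k where "k = 2 * pi / lam"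
  define a where "a = k * (cos (p$3) - cos (q$3))"
  define b where "b = k * (sin (p$3) - sin (q$3))"
  define C where "C = cis (- gabor_phase lam p q) *
    complex_of_real (exp (- ((p$1 - q$1)\<^sup>2 + (p$2 - q$2)\<^sup>2) / (4 * sig\<^sup>2)))"
  define f where "f c m t = cis (c * (t - m)) * complex_of_real (exp (- ((t - m)\<^sup>2) / sig\<^sup>2))" for c m t
  have "k / 2 * ((cos (p$3) + cos (q$3)) * (p$1 - q$1) + (sin (p$3) + sin (q$3)) * (p$2 - q$2)) = gabor_phase lam p q"
    by (simp add: k_def gabor_phase_def)
  then have factor: "gabor lam sig p z * cnj (gabor lam sig q z) =
      C * (f a ((p$1 + q$1) / 2) (fst z) * f b ((p$2 + q$2) / 2) (snd z))" for z
    using gaussian_wave_mult_cnj[of sig k] assms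
    by (cases z) (simp add: gabor_eq C_def f_def a_def b_def k_def mult.assoc)
  have "has_bochner_integral lborel (\<lambda>z. gabor lam sig p z * cnj (gabor lam sig q z))
          (C * (complex_of_real (sqrt pi * sig * exp (- (a\<^sup>2 * sig\<^sup>2) / 4)) *
                complex_of_real (sqrt pi * sig * exp (- (b\<^sup>2 * sig\<^sup>2) / 4))))"
    unfolding factor f_def
    by (intro has_bochner_integral_mult_right has_bochner_integral_lborel_pair_mult
          has_bochner_integral_gaussian_cis assms)
  moreover have "exp (- ((p$1 - q$1)\<^sup>2 + (p$2 - q$2)\<^sup>2) / (4 * sig\<^sup>2)) *
      ((sqrt pi * sig * exp (- (a\<^sup>2 * sig\<^sup>2) / 4)) * (sqrt pi * sig * exp (- (b\<^sup>2 * sig\<^sup>2) / 4)))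
      = pi * sig\<^sup>2 * exp (- gabor_decay lam sig p q)"
  proof -
    have "a\<^sup>2 + b\<^sup>2 = 2 * k\<^sup>2 * (1 - cos (p$3 - q$3))"
      unfolding a_def b_def cos_diff
      using sin_cos_squared_add2[of "p$3"] sin_cos_squared_add2[of "q$3"] by algebra
    then have "(a\<^sup>2 + b\<^sup>2) * sig\<^sup>2 / 4 = sig\<^sup>2 * k\<^sup>2 * (1 - cos (p$3 - q$3)) / 2"
      by simp
    then have "a\<^sup>2 * sig\<^sup>2 / 4 + b\<^sup>2 * sig\<^sup>2 / 4 = sig\<^sup>2 * k\<^sup>2 * (1 - cos (p$3 - q$3)) / 2"
      by (simp add: distrib_right add_divide_distrib)
    then have exponent: "- ((p$1 - q$1)\<^sup>2 + (p$2 - q$2)\<^sup>2) / (4 * sig\<^sup>2) + (- (a\<^sup>2 * sig\<^sup>2) / 4 + - (b\<^sup>2 * sig\<^sup>2) / 4)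
        = - gabor_decay lam sig p q"
      unfolding gabor_decay_def k_def[symmetric] minus_divide_left[symmetric] by linarith
    show ?thesis
      unfolding exponent[symmetric] exp_add by (simp add: power2_eq_square mult_ac)
  qed
  ultimately show ?thesis
    by (simp add: C_def mult_ac flip: of_real_mult)
qed

lemma gabor_dist_sq:
  assumes "sig > 0"
  shows "(gabor_dist lam sig p q)\<^sup>2 =
           2 * pi * sig\<^sup>2 * (1 - exp (- gabor_decay lam sig p q) * cos (gabor_phase lam p q))"
proof -
  have cmod_diff: "(cmod (a - b))\<^sup>2 = Re (a * cnj a) + Re (b * cnj b) - 2 * Re (a * cnj b)" for a b :: complex
    by (simp only: cmod_power2) (simp add: power2_eq_square algebra_simps)
  have norm_sq: "has_bochner_integral lborel (\<lambda>z. gabor lam sig p z * cnj (gabor lam sig p z))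
      (complex_of_real (pi * sig\<^sup>2))" for p
    using has_bochner_integral_gabor_inner[OF assms, of lam p p]
    by (simp add: gabor_decay_def gabor_phase_def)
  have "has_bochner_integral lborel (\<lambda>z. (cmod (gabor lam sig p z - gabor lam sig q z))\<^sup>2)
      (Re (complex_of_real (pi * sig\<^sup>2)) + Re (complex_of_real (pi * sig\<^sup>2)) -
       2 * Re (complex_of_real (pi * sig\<^sup>2 * exp (- gabor_decay lam sig p q)) * cis (- gabor_phase lam p q)))"
    unfolding cmod_diff
    by (intro has_bochner_integral_diff has_bochner_integral_add has_bochner_integral_mult_right
          has_bochner_integral_Re norm_sq has_bochner_integral_gabor_inner assms)
  moreover have "0 \<le> integral\<^sup>L lborel (\<lambda>z. (cmod (gabor lam sig p z - gabor lam sig q z))\<^sup>2)"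
    by (rule integral_nonneg_AE) simp
  ultimately show ?thesis
    unfolding gabor_dist_def by (simp add: has_bochner_integral_iff algebra_simps)
qed

lemma gabor_decay_bounds:
  assumes "sig > 0"
  shows "0 \<le> gabor_decay lam sig p q"
    and "gabor_decay lam sig p q \<le> (1 / (4 * sig\<^sup>2) + sig\<^sup>2 * (2 * pi / lam)\<^sup>2 / 4) * (norm (p - q))\<^sup>2"
    and "\<bar>gabor_decay lam sig p q - ((((p - q)$1)\<^sup>2 + ((p - q)$2)\<^sup>2) / (4 * sig\<^sup>2) + sig\<^sup>2 * (2 * pi / lam)\<^sup>2 * ((p - q)$3)\<^sup>2 / 4)\<bar>
           \<le> sig\<^sup>2 * (2 * pi / lam)\<^sup>2 / 12 * norm (p - q) ^ 3"
proof -
  define d where "d = p - q"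
  define c where "c = sig\<^sup>2 * (2 * pi / lam)\<^sup>2 / 2"
  have c: "0 \<le> c"
    by (simp add: c_def)
  have decay: "gabor_decay lam sig p q = ((d$1)\<^sup>2 + (d$2)\<^sup>2) / (4 * sig\<^sup>2) + c * (1 - cos (d$3))"
    by (simp add: gabor_decay_def d_def c_def)
  have "0 \<le> 1 - cos (d$3)"
    by simp
  with c show "0 \<le> gabor_decay lam sig p q"
    unfolding decay by simp
  have xy: "(d$1)\<^sup>2 + (d$2)\<^sup>2 \<le> (norm d)\<^sup>2" and z: "(d$3)\<^sup>2 \<le> (norm d)\<^sup>2"
    by (simp_all add: norm_vec3_sq)
  have "1 - cos (d$3) \<le> (norm d)\<^sup>2 / 2"
    using one_minus_cos_le_quadratic[of "d$3"] z by linarith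
  then have "c * (1 - cos (d$3)) \<le> c * ((norm d)\<^sup>2 / 2)"
    using c by (rule mult_left_mono)
  moreover have "((d$1)\<^sup>2 + (d$2)\<^sup>2) / (4 * sig\<^sup>2) \<le> (norm d)\<^sup>2 / (4 * sig\<^sup>2)"
    using xy by (simp add: divide_right_mono)
  ultimately show "gabor_decay lam sig p q \<le> (1 / (4 * sig\<^sup>2) + sig\<^sup>2 * (2 * pi / lam)\<^sup>2 / 4) * (norm (p - q))\<^sup>2"
    unfolding decay by (simp add: c_def d_def[symmetric] field_simps)
  have "\<bar>c * (1 - cos (d$3)) - c * ((d$3)\<^sup>2 / 2)\<bar> = \<bar>c * (1 - cos (d$3) - (d$3)\<^sup>2 / 2)\<bar>"
    by (simp only: right_diff_distrib)
  also have "\<dots> = c * \<bar>1 - cos (d$3) - (d$3)\<^sup>2 / 2\<bar>"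
    using c by (simp only: abs_mult abs_of_nonneg)
  also have "\<dots> \<le> c * (\<bar>d$3\<bar> ^ 3 / 6)"
    using c by (intro mult_left_mono abs_one_minus_cos_minus_quadratic_le)
  also have "\<dots> \<le> c * (norm d ^ 3 / 6)"
    using c component_le_norm_cart[of d 3] by (intro mult_left_mono divide_right_mono power_mono) auto
  finally show "\<bar>gabor_decay lam sig p q - ((((p - q)$1)\<^sup>2 + ((p - q)$2)\<^sup>2) / (4 * sig\<^sup>2) + sig\<^sup>2 * (2 * pi / lam)\<^sup>2 * ((p - q)$3)\<^sup>2 / 4)\<bar>
           \<le> sig\<^sup>2 * (2 * pi / lam)\<^sup>2 / 12 * norm (p - q) ^ 3"
    unfolding decay d_def[symmetric] by (simp add: c_def)
qed

lemma gabor_phase_bounds: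
  shows "\<bar>gabor_phase lam p q\<bar> \<le> 2 * \<bar>2 * pi / lam\<bar> * norm (p - q)"
    and "\<bar>gabor_phase lam p q - 2 * pi / lam * (cos (q$3) * (p - q)$1 + sin (q$3) * (p - q)$2)\<bar>
           \<le> \<bar>2 * pi / lam\<bar> * (norm (p - q))\<^sup>2"
proof -
  define d where "d = p - q"
  define k where "k = 2 * pi / lam"
  have d: "\<bar>d$1\<bar> \<le> norm d" "\<bar>d$2\<bar> \<le> norm d" "\<bar>d$3\<bar> \<le> norm d"
    by (simp_all add: component_le_norm_cart)
  have phase: "gabor_phase lam p q = k / 2 * ((cos (p$3) + cos (q$3)) * d$1 + (sin (p$3) + sin (q$3)) * d$2)"
    by (simp add: gabor_phase_def k_def d_def)
  have "\<bar>cos (p$3) + cos (q$3)\<bar> \<le> 2" "\<bar>sin (p$3) + sin (q$3)\<bar> \<le> 2"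
    using abs_cos_le_one[of "p$3"] abs_cos_le_one[of "q$3"] abs_sin_le_one[of "p$3"] abs_sin_le_one[of "q$3"]
    by linarith+
  then have "\<bar>(cos (p$3) + cos (q$3)) * d$1\<bar> \<le> 2 * norm d" "\<bar>(sin (p$3) + sin (q$3)) * d$2\<bar> \<le> 2 * norm d"
    using d by (auto intro!: abs_mult_le_mult)
  then have "\<bar>gabor_phase lam p q\<bar> \<le> \<bar>k\<bar> / 2 * (4 * norm d)"
    unfolding phase by (intro abs_mult_le_mult) auto
  also have "\<dots> = 2 * \<bar>2 * pi / lam\<bar> * norm (p - q)"
    by (simp add: k_def d_def)
  finally show "\<bar>gabor_phase lam p q\<bar> \<le> 2 * \<bar>2 * pi / lam\<bar> * norm (p - q)" .
  have "p$3 = q$3 + d$3"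
    by (simp add: d_def)
  then have "\<bar>cos (p$3) - cos (q$3)\<bar> \<le> norm d" "\<bar>sin (p$3) - sin (q$3)\<bar> \<le> norm d"
    using abs_cos_diff_le[of "p$3" "q$3"] abs_sin_diff_le[of "p$3" "q$3"] d(3) by auto
  then have diff_bounds: "\<bar>(cos (p$3) - cos (q$3)) * d$1\<bar> \<le> norm d * norm d"
      "\<bar>(sin (p$3) - sin (q$3)) * d$2\<bar> \<le> norm d * norm d"
    using d by (auto intro!: abs_mult_le_mult)
  have "gabor_phase lam p q - k * (cos (q$3) * d$1 + sin (q$3) * d$2)
      = k / 2 * ((cos (p$3) - cos (q$3)) * d$1 + (sin (p$3) - sin (q$3)) * d$2)"
    unfolding phase by (simp add: algebra_simps)
  moreover have "\<bar>k / 2 * ((cos (p$3) - cos (q$3)) * d$1 + (sin (p$3) - sin (q$3)) * d$2)\<bar> \<le> \<bar>k\<bar> / 2 * (2 * (norm d)\<^sup>2)"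
    using diff_bounds by (intro abs_mult_le_mult) (auto simp: power2_eq_square)
  moreover have "\<bar>k\<bar> / 2 * (2 * (norm d)\<^sup>2) = \<bar>2 * pi / lam\<bar> * (norm (p - q))\<^sup>2"
    by (simp add: k_def d_def)
  ultimately show "\<bar>gabor_phase lam p q - 2 * pi / lam * (cos (q$3) * (p - q)$1 + sin (q$3) * (p - q)$2)\<bar>
           \<le> \<bar>2 * pi / lam\<bar> * (norm (p - q))\<^sup>2"
    unfolding k_def d_def by metis
qed

lemma gabor_metric_quadratic_form:
  "D \<bullet> (gabor_metric lam sig p0 *v D) = 2 * pi * sig\<^sup>2 *
     (((D$1)\<^sup>2 + (D$2)\<^sup>2) / (4 * sig\<^sup>2) + sig\<^sup>2 * (2 * pi / lam)\<^sup>2 * (D$3)\<^sup>2 / 4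
      + (2 * pi / lam * (cos (p0$3) * D$1 + sin (p0$3) * D$2))\<^sup>2 / 2)"
proof -
  define A where "A = 1 / (4 * sig\<^sup>2)"
  define B where "B = 2 * pi\<^sup>2 / lam\<^sup>2"
  define C where "C = sig\<^sup>2 * pi\<^sup>2 / lam\<^sup>2"
  define c where "c = cos (p0$3)"
  define s where "s = sin (p0$3)"
  have "D \<bullet> (gabor_metric lam sig p0 *v D) = 2 * sig\<^sup>2 * pi *
     (D$1 * (((A + B) * c\<^sup>2 + A * s\<^sup>2) * D$1 + B * c * s * D$2) + D$2 * (B * c * s * D$1 + ((A + B) * s\<^sup>2 + A * c\<^sup>2) * D$2)
      + D$3 * (C * D$3))"
    unfolding gabor_metric_def Let_def A_def[symmetric] B_def[symmetric] C_def[symmetric] c_def[symmetric] s_def[symmetric]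
    by (simp add: inner_vec_def matrix_vector_mult_def sum_3 algebra_simps)
  also have "\<dots> = 2 * sig\<^sup>2 * pi * (A * (c\<^sup>2 + s\<^sup>2) * ((D$1)\<^sup>2 + (D$2)\<^sup>2) + B * (c * D$1 + s * D$2)\<^sup>2 + C * (D$3)\<^sup>2)"
    by (simp add: power2_eq_square algebra_simps)
  also have "\<dots> = 2 * pi * sig\<^sup>2 *
     (((D$1)\<^sup>2 + (D$2)\<^sup>2) / (4 * sig\<^sup>2) + sig\<^sup>2 * (2 * pi / lam)\<^sup>2 * (D$3)\<^sup>2 / 4
      + (2 * pi / lam)\<^sup>2 * (c * D$1 + s * D$2)\<^sup>2 / 2)"
    by (simp add: A_def B_def C_def c_def s_def power_divide power_mult_distrib field_simps)
  finally show ?thesis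
    by (simp only: c_def s_def power_mult_distrib)
qed

lemma det_gabor_metric:
  "det (gabor_metric lam sig p0) =
     8 * sig ^ 6 * pi ^ 3 * (1 / (4 * sig\<^sup>2) + 2 * pi\<^sup>2 / lam\<^sup>2) * (1 / (4 * sig\<^sup>2)) * (sig\<^sup>2 * pi\<^sup>2 / lam\<^sup>2)"
proof -
  define A where "A = 1 / (4 * sig\<^sup>2)"
  define B where "B = 2 * pi\<^sup>2 / lam\<^sup>2"
  define C where "C = sig\<^sup>2 * pi\<^sup>2 / lam\<^sup>2"
  define c where "c = cos (p0$3)"
  define s where "s = sin (p0$3)"
  have "det (gabor_metric lam sig p0) =
      (2 * sig\<^sup>2 * pi) ^ 3 * (((A + B) * c\<^sup>2 + A * s\<^sup>2) * ((A + B) * s\<^sup>2 + A * c\<^sup>2) - (B * c * s)\<^sup>2) * C"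
    unfolding gabor_metric_def Let_def A_def[symmetric] B_def[symmetric] C_def[symmetric] c_def[symmetric] s_def[symmetric]
    by (simp add: det_3 power3_eq_cube power2_eq_square algebra_simps)
  also have "((A + B) * c\<^sup>2 + A * s\<^sup>2) * ((A + B) * s\<^sup>2 + A * c\<^sup>2) - (B * c * s)\<^sup>2 = (A + B) * A * (c\<^sup>2 + s\<^sup>2)\<^sup>2"
    by (simp add: power2_eq_square algebra_simps)
  finally show ?thesis
    by (simp add: A_def B_def C_def c_def s_def power_mult_distrib algebra_simps)
qed

lemma gabor_dist_sq_remainder_cubic:
  assumes "sig > 0"
  shows "\<exists>K. \<forall>D. norm D \<le> 1 \<longrightarrow>
           \<bar>(gabor_dist lam sig (p0 + D) p0)\<^sup>2 - D \<bullet> (gabor_metric lam sig p0 *v D)\<bar> \<le> K * norm D ^ 3"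
proof -
  define k where "k = 2 * pi / lam"
  define M where "M = 1 / (4 * sig\<^sup>2) + sig\<^sup>2 * k\<^sup>2 / 4"
  define K where "K = 2 * pi * sig\<^sup>2 *
    (M\<^sup>2 / 2 + M * (2 * \<bar>k\<bar>)\<^sup>2 / 2 + (2 * \<bar>k\<bar>) ^ 3 / 6 + sig\<^sup>2 * k\<^sup>2 / 12 + 2 * \<bar>k\<bar> * \<bar>k\<bar>)"
  have "\<bar>(gabor_dist lam sig (p0 + D) p0)\<^sup>2 - D \<bullet> (gabor_metric lam sig p0 *v D)\<bar> \<le> K * norm D ^ 3"
    if "norm D \<le> 1" for D
  proof -
    define Q where "Q = gabor_decay lam sig (p0 + D) p0"
    define L where "L = gabor_phase lam (p0 + D) p0"
    define Q' where "Q' = ((D$1)\<^sup>2 + (D$2)\<^sup>2) / (4 * sig\<^sup>2) + sig\<^sup>2 * k\<^sup>2 * (D$3)\<^sup>2 / 4"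
    define L' where "L' = k * (cos (p0$3) * D$1 + sin (p0$3) * D$2)"
    have error: "(gabor_dist lam sig (p0 + D) p0)\<^sup>2 - D \<bullet> (gabor_metric lam sig p0 *v D)
        = 2 * pi * sig\<^sup>2 * ((1 - exp (- Q) * cos L) - (Q' + L'\<^sup>2 / 2))"
      unfolding gabor_dist_sq[OF assms] gabor_metric_quadratic_form Q_def L_def Q'_def L'_def k_def
      by (simp add: algebra_simps)
    have "\<bar>cos (p0$3) * D$1\<bar> \<le> 1 * norm D" "\<bar>sin (p0$3) * D$2\<bar> \<le> 1 * norm D"
      by (intro abs_mult_le_mult component_le_norm_cart abs_cos_le_one abs_sin_le_one)+
    then have "\<bar>L'\<bar> \<le> \<bar>k\<bar> * (2 * norm D)"
      unfolding L'_def by (intro abs_mult_le_mult) auto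
    then have "\<bar>(1 - exp (- Q) * cos L) - (Q' + L'\<^sup>2 / 2)\<bar>
        \<le> (M\<^sup>2 / 2 + M * (2 * \<bar>k\<bar>)\<^sup>2 / 2 + (2 * \<bar>k\<bar>) ^ 3 / 6 + sig\<^sup>2 * k\<^sup>2 / 12 + 2 * \<bar>k\<bar> * \<bar>k\<bar>) * norm D ^ 3"
      using gabor_decay_bounds[OF assms, of lam "p0 + D" p0] gabor_phase_bounds[of lam "p0 + D" p0] that
      by (intro abs_one_minus_exp_cos_remainder_le)
        (simp_all add: Q_def L_def Q'_def L'_def M_def k_def mult_ac)
    then show ?thesis
      unfolding error K_def abs_mult by (simp add: mult.assoc mult_left_mono)
  qed
  then show ?thesis
    by blast
qed

theorem mainTheorem5:
  fixes lam sig :: real and p0 :: "real^3"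
  assumes "lam > 0" and "sig > 0"
  shows "((\<lambda>D::real^3.
            ((gabor_dist lam sig (p0 + D) p0)\<^sup>2 - D \<bullet> (gabor_metric lam sig p0 *v D)) / (norm D)\<^sup>2)
          \<longlongrightarrow> 0) (at 0) \<and>
         det (gabor_metric lam sig p0) =
           8 * sig ^ 6 * pi ^ 3 * (1 / (4 * sig\<^sup>2) + 2 * pi\<^sup>2 / lam\<^sup>2) * (1 / (4 * sig\<^sup>2))
             * (sig\<^sup>2 * pi\<^sup>2 / lam\<^sup>2)"
proof
  obtain K where K: "\<forall>D. norm D \<le> 1 \<longrightarrow>
      \<bar>(gabor_dist lam sig (p0 + D) p0)\<^sup>2 - D \<bullet> (gabor_metric lam sig p0 *v D)\<bar> \<le> K * norm D ^ 3"
    using gabor_dist_sq_remainder_cubic[OF \<open>sig > 0\<close>] by blast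
  have "eventually (\<lambda>D::real^3. norm D \<le> 1) (at 0)"
    unfolding eventually_at by (rule exI[of _ 1]) auto
  with K show "((\<lambda>D::real^3.
      ((gabor_dist lam sig (p0 + D) p0)\<^sup>2 - D \<bullet> (gabor_metric lam sig p0 *v D)) / (norm D)\<^sup>2) \<longlongrightarrow> 0) (at 0)"
    by (intro tendsto_div_norm_sq_zero_if_cubic_bound) (auto elim: eventually_mono)
qed (rule det_gabor_metric)

end
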